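(* Let $d\in T^{W_P}$ and $q=\alpha_1(d)$. Then, as rational functions on $Z_d$, $$\mathcal F_d\circ\pi_R=W_q\circ\pi_L,\qquad W_q=\frac{p_1}{p_0}+\sum_{l=1}^{m-1}\frac{p_{l+1}p_{2m-1-l}}{p_lp_{2m-1-l}-p_{l-1}p_{2m-l}+\dots+(-1)^lp_0p_{2m-1}}+q\frac{p_1}{p_{2m-1}},$$ $W_q$ being regarded as a rational function on $\mathbb P^{2m-1}$ (it is homogeneous of degree $0$ in the $p_k$).
   Context: Fix an integer $m\ge 2$. Let $V=\mathbb C^{2m}$ and let $J$ be the $2m\times 2m$ matrix with $J_{i,2m+1-i}=(-1)^i$ for $1\le i\le 2m$ and all other entries $0$. Let $G=\mathrm{PSp}(V,J)\cong\mathrm{PSp}_{2m}(\mathbb C)$, whose elements are represented by matrices. Let $E_{i,j}$ denote matrix units, $e_i=E_{i,i+1}+E_{2m-i,2m-i+1}$ for $1\le i\le m-1$, $e_m=E_{m,m+1}$, $f_i=e_i^{T}$, $x_i(a)=\exp(ae_i)$, $y_i(a)=\exp(af_i)$. Let $B_+=TU_+$ and $B_-=TU_-$ be the upper resp. lower triangular elements of $G$, with $U_\pm$ their unipotent radicals and $T$ the diagonal elements $(d_{ij})$ with $d_{ii}=d_{2m+1-i,2m+1-i}^{-1}$. The Weyl group $W$ is generated by $s_1,\dots,s_m$ with representatives $\dot s_i=y_i(-1)x_i(1)y_i(-1)$; for $w=s_{i_1}\cdots s_{i_k}$ reduced, $\dot w=\dot s_{i_1}\cdots\dot s_{i_k}$.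 Let $W_P=\langle s_2,\dots,s_m\rangle$, $w_P$ its longest element, $w_0$ the longest element of $W$. Let $T^{W_P}$ be the $W_P$-fixed part of $T$, and $\alpha_1(d)=d_{11}/d_{22}$. For $d\in T^{W_P}$ let $Z_d=B_-\dot w_0\cap U_+d\dot w_PU_-$. The open Richardson variety is $\mathcal R=(B_+\dot w_PB_-\cap B_-\dot w_0B_-)/B_-\subset G/B_-$, and $\pi_R:Z_d\to\mathcal R$, $z\mapsto zB_-$, is an isomorphism. Each $z\in Z_d$ is written uniquely as $z=u_1\dot w_Pd\bar u_2$ with $u_1\in U_+\cap\dot w_PU_+\dot w_P^{-1}$ and $\bar u_2\in U_-$. For $u\in U_+$ put $e_i^*(u)=u_{i,i+1}$, and for $\bar u\in U_-$ put $f_i^*(\bar u)=\bar u_{i+1,i}$. The superpotential is $\mathcal F_d(\pi_R(z))=\sum_{i=1}^m e_i^*(u_1)+\sum_{i=1}^m f_i^*(\bar u_2)$. Plücker coordinates: for a matrix $g$, $p_k(g)=g_{2m,2m-k}$ ($0\le k\le 2m-1$); $\pi_L:Z_d\to\mathbb P^{2m-1}$, $z\mapsto(p_0(z):\dots:p_{2m-1}(z))$. *)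

theory Defs
  imports "Jordan_Normal_Form.Matrix"
begin

text \<open>All matrices are 2m x 2m complex matrices.  We use the paper's 1-based
  indices: entry (i,j) of the paper is entry (i-1,j-1) of a JNF matrix.\<close>

definition ent :: "complex mat \<Rightarrow> nat \<Rightarrow> nat \<Rightarrow> complex" where
  "ent g i j = g $$ (i - 1, j - 1)"

definition Emat :: "nat \<Rightarrow> nat \<Rightarrow> nat \<Rightarrow> complex mat" where
  "Emat m i j = mat (2*m) (2*m) (\<lambda>(a,b). if a + 1 = i \<and> b + 1 = j then 1 else 0)"

definition Jmat :: "nat \<Rightarrow> complex mat" where
  "Jmat m = mat (2*m) (2*m) (\<lambda>(a,b). if a + b + 1 = 2*m then (-1)^(a+1) else 0)"

definition emat :: "nat \<Rightarrow> nat \<Rightarrow> complex mat" where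
  "emat m i = (if i = m then Emat m m (m+1)
               else Emat m i (i+1) + Emat m (2*m-i) (2*m-i+1))"

definition fmat :: "nat \<Rightarrow> nat \<Rightarrow> complex mat" where
  "fmat m i = transpose_mat (emat m i)"

text \<open>Matrix exponential of an n x n nilpotent matrix A: since A^n = 0 the
  exponential series terminates, exp A = sum_{k<=n} A^k / k!.  The matrices
  a e_i, a f_i are nilpotent, so this is exactly exp.\<close>
definition mexp_nilp :: "nat \<Rightarrow> complex mat \<Rightarrow> complex mat" where
  "mexp_nilp n A = mat n n (\<lambda>(i,j). \<Sum>k\<le>n. (A ^\<^sub>m k) $$ (i,j) / of_nat (fact k))"

definition xgen :: "nat \<Rightarrow> nat \<Rightarrow> complex \<Rightarrow> complex mat" where
  "xgen m i a = mexp_nilp (2*m) (a \<cdot>\<^sub>m emat m i)"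

definition ygen :: "nat \<Rightarrow> nat \<Rightarrow> complex \<Rightarrow> complex mat" where
  "ygen m i a = mexp_nilp (2*m) (a \<cdot>\<^sub>m fmat m i)"

definition sdot :: "nat \<Rightarrow> nat \<Rightarrow> complex mat" where
  "sdot m i = ygen m i (-1) * xgen m i 1 * ygen m i (-1)"

definition wordmat :: "nat \<Rightarrow> nat list \<Rightarrow> complex mat" where
  "wordmat m w = foldr (\<lambda>i M. sdot m i * M) w (1\<^sub>m (2*m))"

text \<open>Reduced words: w_0 = (s_1 ... s_m)^m (a power c^{h/2} of a Coxeter
  element, h = 2m, which is a reduced word for the longest element of type C_m),
  and w_P = (s_2 ... s_m)^(m-1), the analogous reduced word in W_P of type C_{m-1}.
  By Tits' lemma the representative does not depend on the reduced word.\<close>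
definition w0dot :: "nat \<Rightarrow> complex mat" where
  "w0dot m = wordmat m (concat (replicate m [1..<m+1]))"

definition wPdot :: "nat \<Rightarrow> complex mat" where
  "wPdot m = wordmat m (concat (replicate (m-1) [2..<m+1]))"

definition Sp :: "nat \<Rightarrow> complex mat set" where
  "Sp m = {g. g \<in> carrier_mat (2*m) (2*m) \<and> transpose_mat g * Jmat m * g = Jmat m}"

definition Tor :: "nat \<Rightarrow> complex mat set" where
  "Tor m = {d \<in> Sp m. (\<forall>i\<in>{1..2*m}. \<forall>j\<in>{1..2*m}. i \<noteq> j \<longrightarrow> ent d i j = 0)
            \<and> (\<forall>i\<in>{1..2*m}. ent d i i * ent d (2*m+1-i) (2*m+1-i) = 1)}"

text \<open>W_P-fixed part of T: fixed under conjugation by the generators s_2..s_m.\<close>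
definition TorWP :: "nat \<Rightarrow> complex mat set" where
  "TorWP m = {d \<in> Tor m. \<forall>i\<in>{2..m}. sdot m i * d = d * sdot m i}"

definition Uplus :: "nat \<Rightarrow> complex mat set" where
  "Uplus m = {u \<in> Sp m. (\<forall>i\<in>{1..2*m}. \<forall>j\<in>{1..2*m}. j < i \<longrightarrow> ent u i j = 0)
             \<and> (\<forall>i\<in>{1..2*m}. ent u i i = 1)}"

definition Uminus :: "nat \<Rightarrow> complex mat set" where
  "Uminus m = {u \<in> Sp m. (\<forall>i\<in>{1..2*m}. \<forall>j\<in>{1..2*m}. i < j \<longrightarrow> ent u i j = 0)
             \<and> (\<forall>i\<in>{1..2*m}. ent u i i = 1)}"

definition Bminus :: "nat \<Rightarrow> complex mat set" where
  "Bminus m = {b \<in> Sp m. (\<forall>i\<in>{1..2*m}. \<forall>j\<in>{1..2*m}. i < j \<longrightarrow> ent b i j = 0)}"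

text \<open>U_+ \<inter> w_P U_+ w_P^{-1}.\<close>
definition UplusWP :: "nat \<Rightarrow> complex mat set" where
  "UplusWP m = {u \<in> Uplus m. \<exists>v\<in>Uplus m. u * wPdot m = wPdot m * v}"

definition Zd :: "nat \<Rightarrow> complex mat \<Rightarrow> complex mat set" where
  "Zd m d = {z. (\<exists>b\<in>Bminus m. z = b * w0dot m)
               \<and> (\<exists>u\<in>Uplus m. \<exists>u'\<in>Uminus m. z = u * d * wPdot m * u')}"

definition alpha1 :: "complex mat \<Rightarrow> complex" where
  "alpha1 d = ent d 1 1 / ent d 2 2"

definition plk :: "nat \<Rightarrow> complex mat \<Rightarrow> nat \<Rightarrow> complex" where
  "plk m g k = ent g (2*m) (2*m - k)"

text \<open>Superpotential value F_d(pi_R(z)) computed from the decomposition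
  z = u1 w_P d u2.\<close>
definition Fsum :: "nat \<Rightarrow> complex mat \<Rightarrow> complex mat \<Rightarrow> complex" where
  "Fsum m u1 u2 = (\<Sum>i=1..m. ent u1 i (i+1)) + (\<Sum>i=1..m. ent u2 (i+1) i)"

definition Dden :: "nat \<Rightarrow> (nat \<Rightarrow> complex) \<Rightarrow> nat \<Rightarrow> complex" where
  "Dden m p l = (\<Sum>j=0..l. (-1)^j * p (l - j) * p (2*m - 1 - l + j))"

definition Wq :: "nat \<Rightarrow> complex \<Rightarrow> (nat \<Rightarrow> complex) \<Rightarrow> complex" where
  "Wq m q p = p 1 / p 0
     + (\<Sum>l=1..m-1. p (l+1) * p (2*m-1-l) / Dden m p l)
     + q * p 1 / p (2*m-1)"

end

theory Submission
  imports Defs "Jordan_Normal_Form.Determinant"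
begin

(*
  Write n = 2m.  The representatives of w_0, w_P and J are signed permutation matrices, whose
  closed forms follow from the reduced words.  As z = b w_0 with b lower triangular, z vanishes
  above its antidiagonal.  Reading z = u1 w_P d u2 row by row then shows that the last row of z
  is d_nn times the last row R of u2, so p_k = d_nn R_(n-k), and that below the diagonal every
  middle row of u2 is a multiple of R.  The symplectic relation between such a row and the last
  row of u2 fixes these multiples in terms of the alternating sums of R_k R_(n+1-k), which are
  the denominators of W_q.  For the last term, the symplectic relation for u1 gives
  (u1)_12 = (u1)_(n-1,n), and d commuting with w_P gives d_22 = d_(n-1,n-1), hence the factor q.
*)

section \<open>Matrix entries and monomial matrices\<close>

lemma index_mult_mat_sum:
  assumes "A \<in> carrier_mat n k" "B \<in> carrier_mat k n'" "i < n" "j < n'"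
  shows "(A * B) $$ (i,j) = (\<Sum>l<k. A $$ (i,l) * B $$ (l,j))"
  using assms by (auto simp: scalar_prod_def lessThan_atLeast0 intro!: sum.cong)

lemma sum_two_point_left:
  fixes g :: "nat \<Rightarrow> 'a :: comm_ring_1"
  shows "(\<Sum>l<n. (if l = a then x else if l = b \<and> Q then y else 0) * g l) =
    (if a < n then x * g a else 0) + (if Q \<and> b < n \<and> b \<noteq> a then y * g b else 0)"
proof -
  have "(\<Sum>l<n. (if l = a then x else if l = b \<and> Q then y else 0) * g l) =
      (\<Sum>l<n. (if l = a then x * g l else 0) + (if l = b then (if Q \<and> b \<noteq> a then y * g l else 0) else 0))"
    by (intro sum.cong) auto
  then show ?thesis
    by (simp add: sum.distrib)
qed

lemma sum_two_point:
  fixes g :: "nat \<Rightarrow> 'a :: comm_ring_1"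
  shows "(\<Sum>l<n. (if l = a then x else if l = b then y else 0) * g l) =
    (if a < n then x * g a else 0) + (if b < n \<and> b \<noteq> a then y * g b else 0)"
  using sum_two_point_left[where Q = True, unfolded simp_thms(21,22)] .

lemma sum_two_point_right:
  fixes g :: "nat \<Rightarrow> 'a :: comm_ring_1"
  shows "(\<Sum>l<n. g l * (if l = a then x else if l = b \<and> Q then y else 0)) =
    (if a < n then g a * x else 0) + (if Q \<and> b < n \<and> b \<noteq> a then g b * y else 0)"
  using sum_two_point_left[where g = g] by (simp add: mult.commute)

definition monomial_mat :: "nat \<Rightarrow> (nat \<Rightarrow> nat) \<Rightarrow> (nat \<Rightarrow> 'a :: comm_ring_1) \<Rightarrow> 'a mat" where
  "monomial_mat n p s = mat n n (\<lambda>(r,c). if c = p r then s r else 0)"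

lemma monomial_mat_carrier [simp]: "monomial_mat n p s \<in> carrier_mat n n"
  and dim_monomial_mat [simp]: "dim_row (monomial_mat n p s) = n" "dim_col (monomial_mat n p s) = n"
  by (simp_all add: monomial_mat_def)

lemma index_monomial_mat [simp]:
  "r < n \<Longrightarrow> c < n \<Longrightarrow> monomial_mat n p s $$ (r,c) = (if c = p r then s r else 0)"
  by (simp add: monomial_mat_def)

lemma index_monomial_mat_mult:
  assumes "A \<in> carrier_mat n n'" "r < n" "c < n'" "p r < n"
  shows "(monomial_mat n p s * A) $$ (r,c) = s r * A $$ (p r, c)"
proof -
  have "(monomial_mat n p s * A) $$ (r,c) = (\<Sum>l<n. monomial_mat n p s $$ (r,l) * A $$ (l,c))"
    using assms by (intro index_mult_mat_sum) auto
  also have "\<dots> = (\<Sum>l<n. if l = p r then s r * A $$ (p r,c) else 0)"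
    using assms by (intro sum.cong) auto
  finally show ?thesis
    using assms by simp
qed

lemma index_mult_monomial_mat:
  assumes "A \<in> carrier_mat n' n" "r < n'" "c < n" "q < n" "\<And>l. l < n \<Longrightarrow> c = p l \<longleftrightarrow> l = q"
  shows "(A * monomial_mat n p s) $$ (r,c) = A $$ (r,q) * s q"
proof -
  have "(A * monomial_mat n p s) $$ (r,c) = (\<Sum>l<n. A $$ (r,l) * monomial_mat n p s $$ (l,c))"
    using assms by (intro index_mult_mat_sum) auto
  also have "\<dots> = (\<Sum>l<n. if l = q then A $$ (r,q) * s q else 0)"
    using assms by (intro sum.cong) auto
  finally show ?thesis
    using assms by simp
qed

lemma monomial_mat_mult:
  assumes "\<And>r. r < n \<Longrightarrow> p r < n"
  shows "monomial_mat n p s * monomial_mat n p' s' = monomial_mat n (p' \<circ> p) (\<lambda>r. s r * s' (p r))"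
proof (rule eq_matI)
  fix i j assume "i < dim_row (monomial_mat n (p' \<circ> p) (\<lambda>r. s r * s' (p r)))"
    "j < dim_col (monomial_mat n (p' \<circ> p) (\<lambda>r. s r * s' (p r)))"
  then show "(monomial_mat n p s * monomial_mat n p' s') $$ (i,j) =
      monomial_mat n (p' \<circ> p) (\<lambda>r. s r * s' (p r)) $$ (i,j)"
    using assms by (subst index_monomial_mat_mult) auto
qed auto

lemma monomial_mat_cong:
  assumes "\<And>r. r < n \<Longrightarrow> p r = p' r \<and> s r = s' r"
  shows "monomial_mat n p s = monomial_mat n p' s'"
  by (rule eq_matI) (use assms in auto)

lemma one_mat_monomial: "1\<^sub>m n = monomial_mat n id (\<lambda>_. 1)"
  by (rule eq_matI) auto

lemma diagonal_mat_monomial: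
  assumes "D \<in> carrier_mat n n" "\<And>i j. i < n \<Longrightarrow> j < n \<Longrightarrow> i \<noteq> j \<Longrightarrow> D $$ (i,j) = 0"
  shows "D = monomial_mat n id (\<lambda>r. D $$ (r,r))"
  by (rule eq_matI) (use assms in auto)

section \<open>The simple reflections\<close>

lemma mexp_nilp_square_zero:
  assumes A: "A \<in> carrier_mat n n" and AA: "A * A = 0\<^sub>m n n"
  shows "mexp_nilp n A = 1\<^sub>m n + A"
proof (rule eq_matI)
  have pow: "A ^\<^sub>m k = 0\<^sub>m n n" if "2 \<le> k" for k
    using that
  proof (induction k rule: dec_induct)
    case (step k)
    then show ?case using A by simp
  qed (use A AA in \<open>simp add: numeral_2_eq_2\<close>)
  fix r c assume "r < dim_row (1\<^sub>m n + A)" "c < dim_col (1\<^sub>m n + A)"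
  then have rc: "r < n" "c < n" using A by auto
  have "{..n} = {0, 1} \<union> {2..n}" using rc by auto
  then have "mexp_nilp n A $$ (r,c) = (A ^\<^sub>m 0) $$ (r,c) + (A ^\<^sub>m 1) $$ (r,c)"
    using rc pow by (simp add: mexp_nilp_def sum.union_disjoint)
  then show "mexp_nilp n A $$ (r,c) = (1\<^sub>m n + A) $$ (r,c)"
    using A rc by simp
qed (use A in \<open>auto simp: mexp_nilp_def\<close>)

definition raising_mat :: "nat \<Rightarrow> (nat \<Rightarrow> bool) \<Rightarrow> 'a :: comm_ring_1 mat" where
  "raising_mat n P = mat n n (\<lambda>(r,c). if P r \<and> c = r + 1 then 1 else 0)"

lemma raising_mat_carrier [simp]: "raising_mat n P \<in> carrier_mat n n"
  and dim_raising_mat [simp]: "dim_row (raising_mat n P) = n" "dim_col (raising_mat n P) = n"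
  by (simp_all add: raising_mat_def)

lemma raising_mat_square_zero:
  assumes "\<And>r. P r \<Longrightarrow> \<not> P (r + 1)"
  shows "(a \<cdot>\<^sub>m raising_mat n P) * (a \<cdot>\<^sub>m raising_mat n P) = 0\<^sub>m n n"
    "(a \<cdot>\<^sub>m transpose_mat (raising_mat n P)) * (a \<cdot>\<^sub>m transpose_mat (raising_mat n P)) = 0\<^sub>m n n"
proof -
  let ?E = "a \<cdot>\<^sub>m raising_mat n P" and ?F = "a \<cdot>\<^sub>m transpose_mat (raising_mat n P)"
  have "(?E * ?E) $$ (r,c) = 0" if "r < n" "c < n" for r c
  proof -
    have "(?E * ?E) $$ (r,c) = (\<Sum>l<n. ?E $$ (r,l) * ?E $$ (l,c))"
      using that by (intro index_mult_mat_sum) auto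
    also have "\<dots> = 0"
      using that assms by (intro sum.neutral) (auto simp: raising_mat_def)
    finally show ?thesis .
  qed
  then show "?E * ?E = 0\<^sub>m n n"
    by (intro eq_matI) auto
  have "(?F * ?F) $$ (r,c) = 0" if "r < n" "c < n" for r c
  proof -
    have "(?F * ?F) $$ (r,c) = (\<Sum>l<n. ?F $$ (r,l) * ?F $$ (l,c))"
      using that by (intro index_mult_mat_sum) auto
    also have "\<dots> = 0"
      using that assms by (intro sum.neutral) (auto simp: raising_mat_def)
    finally show ?thesis .
  qed
  then show "?F * ?F = 0\<^sub>m n n"
    by (intro eq_matI) auto
qed

lemma index_one_minus_transpose_raising:
  assumes "r < n" "c < n"
  shows "(1\<^sub>m n - transpose_mat (raising_mat n P)) $$ (r,c) =
    (if c = r then 1 else if c = r - 1 \<and> (0 < r \<and> P (r - 1)) then -1 else 0)"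
  using assms by (auto simp: raising_mat_def)

lemma index_reflection_half_product:
  assumes "\<And>r. P r \<Longrightarrow> r + 1 < n" "\<And>r. P r \<Longrightarrow> \<not> P (r + 1)" "r < n" "c < n"
  shows "((1\<^sub>m n - transpose_mat (raising_mat n P)) * (1\<^sub>m n + raising_mat n P)) $$ (r,c) =
    (if P r then (if c = r \<or> c = r + 1 then 1 else 0)
     else if 0 < r \<and> P (r - 1) then (if c = r - 1 then -1 else 0) else (if c = r then 1 else 0))"
proof -
  have no_pred: "\<not> P r" if "0 < r" "P (r - 1)" for r
    using that assms(2)[of "r - 1"] by simp
  let ?Y = "1\<^sub>m n - transpose_mat (raising_mat n P)" and ?X = "1\<^sub>m n + raising_mat n P"
  have Y: "?Y \<in> carrier_mat n n" and X: "?X \<in> carrier_mat n n"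
    by (auto simp: minus_carrier_mat)
  have "(?Y * ?X) $$ (r,c) = (\<Sum>l<n. ?Y $$ (r,l) * ?X $$ (l,c))"
    by (rule index_mult_mat_sum[OF Y X assms(3,4)])
  also have "\<dots> = (\<Sum>l<n. (if l = r then 1 else if l = r - 1 \<and> (0 < r \<and> P (r - 1)) then -1 else 0) * ?X $$ (l,c))"
    by (rule sum.cong[OF refl]) (simp only: index_one_minus_transpose_raising[OF assms(3)] lessThan_iff)
  also have "\<dots> = ?X $$ (r,c) - (if 0 < r \<and> P (r - 1) then ?X $$ (r - 1, c) else 0)"
    unfolding sum_two_point_left using assms by auto
  also have "\<dots> = (if P r then (if c = r \<or> c = r + 1 then 1 else 0)
     else if 0 < r \<and> P (r - 1) then (if c = r - 1 then -1 else 0) else (if c = r then 1 else 0))"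
    using assms no_pred[of r] by (auto simp: raising_mat_def)
  finally show ?thesis .
qed

text \<open>On each block spanned by \<open>e\<^sub>p, e\<^sub>p\<^sub>+\<^sub>1\<close> with \<open>P p\<close> the product is
  \<open>(1 0; -1 1) (1 1; 0 1) (1 0; -1 1) = (0 1; -1 0)\<close>.\<close>
lemma reflection_monomial:
  assumes "\<And>r. P r \<Longrightarrow> r + 1 < n" "\<And>r. P r \<Longrightarrow> \<not> P (r + 1)"
  defines "E \<equiv> raising_mat n P"
  shows "(1\<^sub>m n - transpose_mat E) * (1\<^sub>m n + E) * (1\<^sub>m n - transpose_mat E) =
    monomial_mat n (\<lambda>r. if P r then r + 1 else if 0 < r \<and> P (r - 1) then r - 1 else r)
      (\<lambda>r. if 0 < r \<and> P (r - 1) then -1 else 1)"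
    (is "?Y * ?X * ?Y = ?M")
proof -
  let ?G = "\<lambda>r c. (?Y * ?X) $$ (r,c)"
  have G: "?G r c = (if P r then (if c = r \<or> c = r + 1 then 1 else 0)
     else if 0 < r \<and> P (r - 1) then (if c = r - 1 then -1 else 0) else (if c = r then 1 else 0))"
    if "r < n" "c < n" for r c
    unfolding E_def by (rule index_reflection_half_product) (use assms that in auto)
  have no_pred: "\<not> P r" if "0 < r" "P (r - 1)" for r
    using that assms(2)[of "r - 1"] by simp
  have carrier: "?Y * ?X \<in> carrier_mat n n" "?Y \<in> carrier_mat n n"
    by (auto simp: E_def minus_carrier_mat)
  have "(?Y * ?X * ?Y) $$ (r,c) = ?M $$ (r,c)" if rc: "r < n" "c < n" for r c
  proof -
    have "(?Y * ?X * ?Y) $$ (r,c) = (\<Sum>l<n. ?G r l * ?Y $$ (l,c))"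
      using rc carrier by (intro index_mult_mat_sum) auto
    also have "\<dots> = (\<Sum>l<n. ?G r l * (if l = c then 1 else if l = c + 1 \<and> P c then -1 else 0))"
    proof (rule sum.cong[OF refl])
      fix l assume "l \<in> {..<n}"
      then show "?G r l * ?Y $$ (l,c) = ?G r l * (if l = c then 1 else if l = c + 1 \<and> P c then -1 else 0)"
        unfolding E_def using rc assms(2) by (subst index_one_minus_transpose_raising) auto
    qed
    also have "\<dots> = ?G r c + (if P c \<and> c + 1 < n then - ?G r (c + 1) else 0)"
      unfolding sum_two_point_right using rc by simp
    also have "\<dots> = ?M $$ (r,c)"
    proof -
      consider "P r" | "\<not> P r" "0 < r" "P (r - 1)" | "\<not> P r" "\<not> (0 < r \<and> P (r - 1))"
        by blast
      then show ?thesis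
      proof cases
        case 1
        moreover have "\<not> (0 < r \<and> P (r - 1))" "\<not> P (r + 1)"
          using 1 no_pred[of r] assms(2) by auto
        ultimately show ?thesis using rc assms(1) by (auto simp: G)
      next
        case 2
        then show ?thesis using rc assms(2)[of c] by (auto simp: G)
      next
        case 3
        then show ?thesis using rc by (auto simp: G)
      qed
    qed
    finally show ?thesis .
  qed
  then show ?thesis
    by (intro eq_matI) (use carrier in auto)
qed

lemma emat_raising:
  assumes "1 \<le> i" "i \<le> m"
  shows "emat m i = raising_mat (2*m) (\<lambda>r. r = i - 1 \<or> r = 2*m - i - 1)"
proof (rule eq_matI)
  fix r c assume "r < dim_row (raising_mat (2*m) (\<lambda>r. r = i - 1 \<or> r = 2*m - i - 1))"
    "c < dim_col (raising_mat (2*m) (\<lambda>r. r = i - 1 \<or> r = 2*m - i - 1))"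
  then have rc: "r < 2*m" "c < 2*m" by auto
  show "emat m i $$ (r,c) = raising_mat (2*m) (\<lambda>r. r = i - 1 \<or> r = 2*m - i - 1) $$ (r,c)"
  proof (cases "i = m")
    case True
    then show ?thesis using assms rc by (auto simp: emat_def Emat_def raising_mat_def)
  next
    case False
    then have "r = i - 1 \<longleftrightarrow> r + 1 = i" "r = 2*m - i - 1 \<longleftrightarrow> r + 1 = 2*m - i" "i \<noteq> 2*m - i"
      using assms by auto
    then show ?thesis using False rc by (simp add: emat_def Emat_def raising_mat_def)
  qed
qed (auto simp: emat_def Emat_def)

lemma simple_refl_blocks:
  fixes i m r :: nat
  assumes "1 \<le> i" "i \<le> m"
  shows "r = i - 1 \<or> r = 2*m - i - 1 \<Longrightarrow> r + 1 < 2*m"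
    and "r = i - 1 \<or> r = 2*m - i - 1 \<Longrightarrow> \<not> (r + 1 = i - 1 \<or> r + 1 = 2*m - i - 1)"
  using assms by (cases "i = m"; auto)+

lemma sdot_raising_product:
  assumes "1 \<le> i" "i \<le> m"
  defines "E \<equiv> raising_mat (2*m) (\<lambda>r. r = i - 1 \<or> r = 2*m - i - 1)"
  shows "sdot m i = (1\<^sub>m (2*m) - transpose_mat E) * (1\<^sub>m (2*m) + E) * (1\<^sub>m (2*m) - transpose_mat E)"
proof -
  note adj = simple_refl_blocks(2)[OF assms(1,2)]
  have "xgen m i 1 = 1\<^sub>m (2*m) + E"
    unfolding xgen_def emat_raising[OF assms(1,2)] E_def
    using raising_mat_square_zero(1)[of _ "1::complex"] adj by (subst mexp_nilp_square_zero) auto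
  moreover have "ygen m i (-1) = 1\<^sub>m (2*m) - transpose_mat E"
  proof -
    have "ygen m i (-1) = 1\<^sub>m (2*m) + (-1) \<cdot>\<^sub>m transpose_mat E"
      unfolding ygen_def fmat_def emat_raising[OF assms(1,2)] E_def
      using raising_mat_square_zero(2)[of _ "-1::complex"] adj by (subst mexp_nilp_square_zero) auto
    also have "\<dots> = 1\<^sub>m (2*m) - transpose_mat E"
      by (rule eq_matI) (auto simp: E_def)
    finally show ?thesis .
  qed
  ultimately show ?thesis
    by (simp add: sdot_def)
qed

section \<open>Reduced words\<close>

text \<open>Indices and sign exponents are integers so that the closed forms below are free of
  truncated subtraction.\<close>
definition signed_perm_mat :: "nat \<Rightarrow> (int \<Rightarrow> int) \<Rightarrow> (int \<Rightarrow> int) \<Rightarrow> complex mat" where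
  "signed_perm_mat n f e = monomial_mat n (\<lambda>r. nat (f (int r))) (\<lambda>r. (-1) ^ nat (e (int r)))"

lemma signed_perm_mat_mult:
  assumes "\<And>x. 0 \<le> x \<Longrightarrow> x < int n \<Longrightarrow> 0 \<le> f x \<and> f x < int n \<and> 0 \<le> e x \<and> 0 \<le> h (f x)"
  shows "signed_perm_mat n f e * signed_perm_mat n g h = signed_perm_mat n (g \<circ> f) (\<lambda>x. e x + h (f x))"
proof -
  have range: "0 \<le> f (int r) \<and> f (int r) < int n \<and> 0 \<le> e (int r) \<and> 0 \<le> h (f (int r))" if "r < n" for r
    using assms[of "int r"] that by simp
  then have "nat (f (int r)) < n" if "r < n" for r
    using that by fastforce
  then show ?thesis
    unfolding signed_perm_mat_def
    by (subst monomial_mat_mult) (use range in \<open>auto intro!: monomial_mat_cong simp: nat_add_distrib power_add\<close>)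
qed

lemma signed_perm_mat_cong:
  assumes "\<And>x. 0 \<le> x \<Longrightarrow> x < int n \<Longrightarrow> f x = f' x \<and> 0 \<le> e x \<and> 0 \<le> e' x \<and> even (e x) = even (e' x)"
  shows "signed_perm_mat n f e = signed_perm_mat n f' e'"
  unfolding signed_perm_mat_def
proof (rule monomial_mat_cong)
  fix r assume "r < n"
  with assms[of "int r"] show "nat (f (int r)) = nat (f' (int r)) \<and> (-1::complex) ^ nat (e (int r)) = (-1) ^ nat (e' (int r))"
    by (simp add: minus_one_power_iff even_nat_iff)
qed

definition simple_refl_perm :: "int \<Rightarrow> int \<Rightarrow> int \<Rightarrow> int" where
  "simple_refl_perm m i x =
     (if x = i - 1 \<or> x = 2*m - i - 1 then x + 1 else if x = i \<or> x = 2*m - i then x - 1 else x)"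

definition simple_refl_sign :: "int \<Rightarrow> int \<Rightarrow> int \<Rightarrow> int" where
  "simple_refl_sign m i x = (if x = i \<or> x = 2*m - i then 1 else 0)"

lemma sdot_signed_perm:
  assumes "1 \<le> i" "i \<le> m"
  shows "sdot m i = signed_perm_mat (2*m) (simple_refl_perm m i) (simple_refl_sign m i)"
proof -
  let ?P = "\<lambda>r. r = i - 1 \<or> r = 2*m - i - 1"
  have "sdot m i = monomial_mat (2*m) (\<lambda>r. if ?P r then r + 1 else if 0 < r \<and> ?P (r - 1) then r - 1 else r)
      (\<lambda>r. if 0 < r \<and> ?P (r - 1) then -1 else 1)"
    unfolding sdot_raising_product[OF assms] using simple_refl_blocks[OF assms] by (rule reflection_monomial)
  also have "\<dots> = signed_perm_mat (2*m) (simple_refl_perm m i) (simple_refl_sign m i)"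
    unfolding signed_perm_mat_def
  proof (rule monomial_mat_cong)
    fix r assume r: "r < 2*m"
    have up: "?P r \<longleftrightarrow> int r = int i - 1 \<or> int r = 2 * int m - int i - 1"
      using assms r by auto
    have down: "0 < r \<and> ?P (r - 1) \<longleftrightarrow> int r = int i \<or> int r = 2 * int m - int i"
      using assms r by auto
    show "(if ?P r then r + 1 else if 0 < r \<and> ?P (r - 1) then r - 1 else r) =
        nat (simple_refl_perm (int m) (int i) (int r)) \<and>
      (if 0 < r \<and> ?P (r - 1) then -1 else 1) = (-1::complex) ^ nat (simple_refl_sign (int m) (int i) (int r))"
      unfolding up down simple_refl_perm_def simple_refl_sign_def using assms r by auto
  qed
  finally show ?thesis .
qed

lemma sdot_carrier [simp]: "sdot m i \<in> carrier_mat (2*m) (2*m)"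
  unfolding sdot_def xgen_def ygen_def by (intro mult_carrier_mat) (auto simp: mexp_nilp_def)

lemma wordmat_carrier [simp]: "wordmat m w \<in> carrier_mat (2*m) (2*m)"
  by (induction w) (auto simp: wordmat_def intro: mult_carrier_mat[OF sdot_carrier])

lemma wordmat_Nil: "wordmat m [] = signed_perm_mat (2*m) id (\<lambda>_. 0)"
  by (simp add: wordmat_def signed_perm_mat_def one_mat_monomial id_def)

lemma wordmat_Cons: "wordmat m (i # w) = sdot m i * wordmat m w"
  by (simp add: wordmat_def)

lemma wordmat_append: "wordmat m (xs @ ys) = wordmat m xs * wordmat m ys"
proof (induction xs)
  case Nil
  show ?case
    using left_mult_one_mat[OF wordmat_carrier[of m ys]] by (simp add: wordmat_def)
next
  case (Cons x xs)
  then show ?case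
    by (simp add: wordmat_Cons assoc_mult_mat[OF sdot_carrier wordmat_carrier wordmat_carrier])
qed

lemma wordmat_single: "wordmat m [i] = sdot m i"
  using right_mult_one_mat[OF sdot_carrier[of m i]] by (simp add: wordmat_def)

text \<open>The signed permutation of the segment \<open>s\<^sub>a s\<^sub>a\<^sub>+\<^sub>1 \<cdots> s\<^sub>j\<^sub>-\<^sub>1\<close>
  (\<open>a \<le> j \<le> m + 1\<close>): rows \<open>a - 1\<close> and \<open>2m - a\<close> jump to \<open>j - 1\<close> and \<open>2m - j\<close>,
  the rows in between shift by one towards them.\<close>
definition coxeter_segment_perm :: "int \<Rightarrow> int \<Rightarrow> int \<Rightarrow> int \<Rightarrow> int" where
  "coxeter_segment_perm m a j x =
     (if x = a - 1 then j - 1 else if x = 2*m - a then 2*m - j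
      else if a \<le> x \<and> x < j \<and> x < m then x - 1
      else if 2*m - j \<le> x \<and> x < 2*m - a \<and> m \<le> x then x + 1 else x)"

definition coxeter_segment_sign :: "int \<Rightarrow> int \<Rightarrow> int \<Rightarrow> int \<Rightarrow> int" where
  "coxeter_segment_sign m a j x =
     (if x = 2*m - a then j - a else if a \<le> x \<and> x < j \<and> x < m then 1 else 0)"

lemma wordmat_segment:
  assumes "1 \<le> a" "a \<le> m" "a \<le> j" "j \<le> m + 1"
  shows "wordmat m [a..<j] = signed_perm_mat (2*m) (coxeter_segment_perm m a j) (coxeter_segment_sign m a j)"
  using assms(3,4)
proof (induction j rule: dec_induct)
  case base
  show ?case
    unfolding upt_conv_Nil[OF order.refl] wordmat_Nil using assms
    by (intro signed_perm_mat_cong) (auto simp: coxeter_segment_perm_def coxeter_segment_sign_def)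
next
  case (step j)
  have "wordmat m [a..<Suc j] = wordmat m [a..<j] * sdot m j"
    using step by (simp add: wordmat_append wordmat_single)
  also have "\<dots> = signed_perm_mat (2*m) (coxeter_segment_perm m a j) (coxeter_segment_sign m a j) *
      signed_perm_mat (2*m) (simple_refl_perm m j) (simple_refl_sign m j)"
    using step assms by (simp add: sdot_signed_perm)
  also have "\<dots> = signed_perm_mat (2*m) (simple_refl_perm m j \<circ> coxeter_segment_perm m a j)
      (\<lambda>x. coxeter_segment_sign m a j x + simple_refl_sign m j (coxeter_segment_perm m a j x))"
    using step assms
    by (intro signed_perm_mat_mult)
      (auto simp: coxeter_segment_perm_def coxeter_segment_sign_def simple_refl_sign_def)
  also have "\<dots> = signed_perm_mat (2*m) (coxeter_segment_perm m a (Suc j)) (coxeter_segment_sign m a (Suc j))"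
    using step assms
    by (intro signed_perm_mat_cong)
      (auto simp: coxeter_segment_perm_def coxeter_segment_sign_def simple_refl_perm_def simple_refl_sign_def)
  finally show ?case .
qed

text \<open>The signed permutation of \<open>(s\<^sub>a \<cdots> s\<^sub>m)\<^sup>k\<close> for \<open>k \<le> m + 1 - a\<close>, written in
  terms of the position \<open>x - a + 1\<close> inside the block of rows \<open>a - 1, \<dots>, 2m - a\<close>
  (of size \<open>2(m + 1 - a)\<close>).\<close>
definition coxeter_power_perm :: "int \<Rightarrow> int \<Rightarrow> int \<Rightarrow> int \<Rightarrow> int" where
  "coxeter_power_perm m a k x =
     (if x < a - 1 \<or> 2*m - a < x then x
      else if x - a + 1 < k then m + k - x + a - 2
      else if x - a + 1 < m + 1 - a then x - k
      else if k + x - a + 1 < 2*(m + 1 - a) then x + k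
      else a - 1 + 3*(m + 1 - a) - (x - a + 1) - k - 1)"

definition coxeter_power_sign :: "int \<Rightarrow> int \<Rightarrow> int \<Rightarrow> int \<Rightarrow> int" where
  "coxeter_power_sign m a k x =
     (if x < a - 1 \<or> 2*m - a < x then 0
      else if x - a + 1 < k then x - a + 1
      else if x - a + 1 < m + 1 - a then k
      else if k + x - a + 1 < 2*(m + 1 - a) then 0
      else k + x - a + 1 - (m + 1 - a))"

lemma wordmat_coxeter_power:
  assumes "1 \<le> a" "a \<le> m" "k \<le> m + 1 - a"
  shows "wordmat m (concat (replicate k [a..<m+1])) =
    signed_perm_mat (2*m) (coxeter_power_perm m a k) (coxeter_power_sign m a k)"
  using assms(3)
proof (induction k)
  case 0
  show ?case
    unfolding concat_replicate_trivial replicate_0 concat.simps wordmat_Nil using assms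
    by (intro signed_perm_mat_cong) (auto simp: coxeter_power_perm_def coxeter_power_sign_def)
next
  case (Suc k)
  let ?Q = "coxeter_segment_perm m a (m + 1)" and ?e = "coxeter_segment_sign m a (m + 1)"
  have "wordmat m (concat (replicate (Suc k) [a..<m+1])) =
      wordmat m [a..<m+1] * wordmat m (concat (replicate k [a..<m+1]))"
    by (simp add: wordmat_append)
  also have "\<dots> = signed_perm_mat (2*m) ?Q ?e *
      signed_perm_mat (2*m) (coxeter_power_perm m a k) (coxeter_power_sign m a k)"
    using Suc assms by (simp add: wordmat_segment del: upt_Suc)
  also have "\<dots> = signed_perm_mat (2*m) (coxeter_power_perm m a k \<circ> ?Q)
      (\<lambda>x. ?e x + coxeter_power_sign m a k (?Q x))"
    using Suc assms
    by (intro signed_perm_mat_mult)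
      (auto simp: coxeter_segment_perm_def coxeter_segment_sign_def coxeter_power_sign_def)
  also have "\<dots> = signed_perm_mat (2*m) (coxeter_power_perm m a (Suc k)) (coxeter_power_sign m a (Suc k))"
    using Suc assms
    by (intro signed_perm_mat_cong)
      (auto simp: coxeter_segment_perm_def coxeter_segment_sign_def coxeter_power_perm_def coxeter_power_sign_def)
  finally show ?case .
qed

lemma w0dot_monomial:
  assumes "1 \<le> m"
  shows "w0dot m = monomial_mat (2*m) (\<lambda>r. 2*m - 1 - r) (\<lambda>r. (-1) ^ r)"
proof -
  have "w0dot m = signed_perm_mat (2*m) (coxeter_power_perm m 1 m) (coxeter_power_sign m 1 m)"
    using wordmat_coxeter_power[of 1 m m] assms by (simp add: w0dot_def)
  also have "\<dots> = monomial_mat (2*m) (\<lambda>r. 2*m - 1 - r) (\<lambda>r. (-1) ^ r)"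
    unfolding signed_perm_mat_def
    by (rule monomial_mat_cong) (auto simp: coxeter_power_perm_def coxeter_power_sign_def)
  finally show ?thesis .
qed

definition wP_perm :: "nat \<Rightarrow> nat \<Rightarrow> nat" where
  "wP_perm m r = (if r = 0 \<or> r = 2*m - 1 then r else 2*m - 1 - r)"

definition wP_sign :: "nat \<Rightarrow> nat \<Rightarrow> complex" where
  "wP_sign m r = (if r = 0 \<or> r = 2*m - 1 then 1 else (-1) ^ (r - 1))"

lemma wPdot_monomial:
  assumes "2 \<le> m"
  shows "wPdot m = monomial_mat (2*m) (wP_perm m) (wP_sign m)"
proof -
  have "wPdot m = signed_perm_mat (2*m) (coxeter_power_perm m 2 (m - 1)) (coxeter_power_sign m 2 (m - 1))"
    using wordmat_coxeter_power[of 2 m "m - 1"] assms by (simp add: wPdot_def)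
  also have "\<dots> = monomial_mat (2*m) (wP_perm m) (wP_sign m)"
    unfolding signed_perm_mat_def using assms
    by (intro monomial_mat_cong)
      (auto simp: coxeter_power_perm_def coxeter_power_sign_def wP_perm_def wP_sign_def of_nat_diff nat_diff_distrib)
  finally show ?thesis .
qed

lemma wordmat_commute:
  assumes "\<And>i. i \<in> set w \<Longrightarrow> sdot m i * g = g * sdot m i" "g \<in> carrier_mat (2*m) (2*m)"
  shows "wordmat m w * g = g * wordmat m w"
  using assms(1)
proof (induction w)
  case Nil
  then show ?case using assms(2) by (simp add: wordmat_def)
next
  case (Cons i w)
  then have IH: "wordmat m w * g = g * wordmat m w"
    by simp
  have "wordmat m (i # w) * g = sdot m i * (wordmat m w * g)"
    by (simp add: wordmat_Cons assoc_mult_mat[OF sdot_carrier wordmat_carrier assms(2)])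
  also have "\<dots> = (sdot m i * g) * wordmat m w"
    by (simp only: IH assoc_mult_mat[OF sdot_carrier assms(2) wordmat_carrier])
  also have "\<dots> = (g * sdot m i) * wordmat m w"
    using Cons.prems by simp
  also have "\<dots> = g * wordmat m (i # w)"
    using Cons by (simp add: wordmat_Cons assoc_mult_mat[OF assms(2) sdot_carrier wordmat_carrier])
  finally show ?case .
qed

section \<open>The symplectic form\<close>

lemma Jmat_monomial: "Jmat m = monomial_mat (2*m) (\<lambda>r. 2*m - 1 - r) (\<lambda>r. (-1) ^ (r + 1))"
  by (rule eq_matI) (auto simp: Jmat_def)

lemma Jmat_carrier [simp]: "Jmat m \<in> carrier_mat (2*m) (2*m)"
  by (simp add: Jmat_def)

lemma Jmat_square: "Jmat m * Jmat m = (-1) \<cdot>\<^sub>m 1\<^sub>m (2*m)"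
proof -
  have sign: "(-1::complex) ^ (r + 1) * (-1) ^ (2*m - 1 - r + 1) = -1" if "r < 2*m" for r
  proof -
    have "r + 1 + (2*m - 1 - r + 1) = 2*m + 1"
      using that by simp
    then have "(-1::complex) ^ (r + 1) * (-1) ^ (2*m - 1 - r + 1) = (-1) ^ (2*m + 1)"
      by (simp only: power_add[symmetric])
    then show ?thesis
      by simp
  qed
  have "Jmat m * Jmat m = monomial_mat (2*m) (\<lambda>r. 2*m - 1 - (2*m - 1 - r)) (\<lambda>r. (-1) ^ (r + 1) * (-1) ^ (2*m - 1 - r + 1))"
    unfolding Jmat_monomial by (subst monomial_mat_mult) (auto simp: comp_def)
  also have "\<dots> = (-1) \<cdot>\<^sub>m 1\<^sub>m (2*m)"
    by (rule eq_matI) (use sign in auto)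
  finally show ?thesis .
qed

text \<open>Since \<open>J\<^sup>-\<^sup>1 = -J\<close>, the identity \<open>A\<^sup>T J A = J\<close> says that \<open>-J A J\<close> is a right, hence
  left, inverse of \<open>A\<^sup>T\<close>.\<close>
lemma Sp_transpose:
  assumes "A \<in> Sp m"
  shows "transpose_mat A \<in> Sp m"
proof -
  define n where "n = 2*m"
  define J where "J = Jmat m"
  define K where "K = (-1) \<cdot>\<^sub>m J"
  have A: "A \<in> carrier_mat n n" and S: "transpose_mat A * J * A = J"
    using assms by (auto simp: Sp_def J_def n_def)
  have J: "J \<in> carrier_mat n n" and K: "K \<in> carrier_mat n n" and At: "transpose_mat A \<in> carrier_mat n n"
    using A by (auto simp: J_def K_def n_def)
  have minus_minus: "(-1) \<cdot>\<^sub>m ((-1) \<cdot>\<^sub>m B) = B" for B :: "complex mat"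
    by (rule eq_matI) auto
  have "J * K = 1\<^sub>m n" "K * J = 1\<^sub>m n"
    unfolding K_def mult_smult_distrib[OF J J] mult_smult_assoc_mat[OF J J]
    using Jmat_square[of m] minus_minus by (simp_all add: J_def n_def)
  note JK = this(1) and KJ = this(2)
  have "transpose_mat A * (J * A * K) = (transpose_mat A * J * A) * K"
    using A J K At by (simp add: assoc_mult_mat[of _ n n _ n _ n])
  also have "\<dots> = 1\<^sub>m n" using S JK by simp
  finally have "transpose_mat A * (J * A * K) = 1\<^sub>m n" .
  then have "(J * A * K) * transpose_mat A = 1\<^sub>m n"
    by (rule mat_mult_left_right_inverse[OF At, rotated]) (use A J K in auto)
  then have "K * ((J * A * K) * transpose_mat A) = K" using K by simp
  moreover have "K * ((J * A * K) * transpose_mat A) = (K * J) * A * K * transpose_mat A"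
    using A J K At by (simp add: assoc_mult_mat[of _ n n _ n _ n])
  ultimately have "A * K * transpose_mat A = K" using KJ A by simp
  then have "(-1) \<cdot>\<^sub>m ((-1) \<cdot>\<^sub>m (A * J * transpose_mat A)) = (-1) \<cdot>\<^sub>m ((-1) \<cdot>\<^sub>m J)"
    unfolding K_def using A J At
    by (simp add: mult_smult_distrib[OF A J] mult_smult_assoc_mat[of _ n n _ n])
  then have "A * J * transpose_mat A = J"
    by (simp only: minus_minus)
  then show ?thesis
    using A by (simp add: Sp_def J_def n_def)
qed

lemma ent_vanish:
  assumes "\<forall>i\<in>{1..n}. \<forall>j\<in>{1..n}. Q i j \<longrightarrow> ent g i j = 0" "r < n" "c < n" "Q (r + 1) (c + 1)"
  shows "g $$ (r,c) = 0"
  using assms by (force simp: ent_def)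

lemma ent_diag:
  assumes "\<forall>i\<in>{1..n}. ent g i i = x" "r < n"
  shows "g $$ (r,r) = x"
  using assms by (force simp: ent_def)

lemma Uplus_entries:
  assumes "u \<in> Uplus m"
  shows "u \<in> carrier_mat (2*m) (2*m)" "transpose_mat u * Jmat m * u = Jmat m"
    "\<And>r c. c < r \<Longrightarrow> r < 2*m \<Longrightarrow> u $$ (r,c) = 0" "\<And>r. r < 2*m \<Longrightarrow> u $$ (r,r) = 1"
proof -
  have u: "u \<in> carrier_mat (2*m) (2*m)" "transpose_mat u * Jmat m * u = Jmat m"
    "\<forall>i\<in>{1..2*m}. \<forall>j\<in>{1..2*m}. j < i \<longrightarrow> ent u i j = 0" "\<forall>i\<in>{1..2*m}. ent u i i = 1"
    using assms unfolding Uplus_def Sp_def by blast+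
  then show "u \<in> carrier_mat (2*m) (2*m)" "transpose_mat u * Jmat m * u = Jmat m"
    by simp_all
  show "\<And>r c. c < r \<Longrightarrow> r < 2*m \<Longrightarrow> u $$ (r,c) = 0"
    using ent_vanish[OF u(3)] by simp
  show "\<And>r. r < 2*m \<Longrightarrow> u $$ (r,r) = 1"
    using ent_diag[OF u(4)] by simp
qed

lemma Uminus_entries:
  assumes "u \<in> Uminus m"
  shows "u \<in> carrier_mat (2*m) (2*m)" "transpose_mat u * Jmat m * u = Jmat m"
    "\<And>r c. r < c \<Longrightarrow> c < 2*m \<Longrightarrow> u $$ (r,c) = 0" "\<And>r. r < 2*m \<Longrightarrow> u $$ (r,r) = 1"
proof -
  have u: "u \<in> carrier_mat (2*m) (2*m)" "transpose_mat u * Jmat m * u = Jmat m"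
    "\<forall>i\<in>{1..2*m}. \<forall>j\<in>{1..2*m}. i < j \<longrightarrow> ent u i j = 0" "\<forall>i\<in>{1..2*m}. ent u i i = 1"
    using assms unfolding Uminus_def Sp_def by blast+
  then show "u \<in> carrier_mat (2*m) (2*m)" "transpose_mat u * Jmat m * u = Jmat m"
    by simp_all
  show "\<And>r c. r < c \<Longrightarrow> c < 2*m \<Longrightarrow> u $$ (r,c) = 0"
    using ent_vanish[OF u(3)] by simp
  show "\<And>r. r < 2*m \<Longrightarrow> u $$ (r,r) = 1"
    using ent_diag[OF u(4)] by simp
qed

lemma Bminus_entries:
  assumes "b \<in> Bminus m"
  shows "b \<in> carrier_mat (2*m) (2*m)" "\<And>r c. r < c \<Longrightarrow> c < 2*m \<Longrightarrow> b $$ (r,c) = 0"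
proof -
  have b: "b \<in> carrier_mat (2*m) (2*m)" "\<forall>i\<in>{1..2*m}. \<forall>j\<in>{1..2*m}. i < j \<longrightarrow> ent b i j = 0"
    using assms unfolding Bminus_def Sp_def by blast+
  then show "b \<in> carrier_mat (2*m) (2*m)"
    by simp
  show "\<And>r c. r < c \<Longrightarrow> c < 2*m \<Longrightarrow> b $$ (r,c) = 0"
    using ent_vanish[OF b(2)] by simp
qed

lemma Tor_entries:
  assumes "d \<in> Tor m"
  shows "d \<in> carrier_mat (2*m) (2*m)" "\<And>r c. r < 2*m \<Longrightarrow> c < 2*m \<Longrightarrow> r \<noteq> c \<Longrightarrow> d $$ (r,c) = 0"
    "\<And>r. r < 2*m \<Longrightarrow> d $$ (r,r) * d $$ (2*m - 1 - r, 2*m - 1 - r) = 1"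
proof -
  have d: "\<forall>i\<in>{1..2*m}. \<forall>j\<in>{1..2*m}. i \<noteq> j \<longrightarrow> ent d i j = 0"
    using assms unfolding Tor_def by blast
  show "d \<in> carrier_mat (2*m) (2*m)"
    using assms unfolding Tor_def Sp_def by blast
  show "\<And>r c. r < 2*m \<Longrightarrow> c < 2*m \<Longrightarrow> r \<noteq> c \<Longrightarrow> d $$ (r,c) = 0"
    using ent_vanish[OF d] by simp
  fix r assume r: "r < 2*m"
  have "\<forall>i\<in>{1..2*m}. ent d i i * ent d (2*m + 1 - i) (2*m + 1 - i) = 1"
    using assms unfolding Tor_def by blast
  then have "ent d (r + 1) (r + 1) * ent d (2*m + 1 - (r + 1)) (2*m + 1 - (r + 1)) = 1"
    using r by (intro bspec[where x = "r + 1"]) auto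
  moreover have "2*m + 1 - (r + 1) = (2*m - 1 - r) + 1"
    using r by auto
  ultimately show "d $$ (r,r) * d $$ (2*m - 1 - r, 2*m - 1 - r) = 1"
    by (simp add: ent_def)
qed

text \<open>Entry \<open>(j, 2m - 1)\<close> of \<open>u J u\<^sup>T = J\<close>.\<close>
lemma Uminus_row_relation:
  assumes "u \<in> Uminus m" "0 < j" "j < 2*m"
  shows "(\<Sum>k<j. u $$ (j,k) * ((-1) ^ (k + 1) * u $$ (2*m - 1, 2*m - 1 - k)))
    + (-1) ^ (j + 1) * u $$ (2*m - 1, 2*m - 1 - j) = 0"
proof -
  define n where "n = 2*m"
  note u = Uminus_entries[OF assms(1), folded n_def]
  have ut: "transpose_mat u \<in> carrier_mat n n" and J: "Jmat m \<in> carrier_mat n n"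
    using u by (auto simp: n_def)
  have uJu: "u * Jmat m * transpose_mat u = Jmat m"
    using Sp_transpose[of u m] assms(1) by (simp add: Uminus_def Sp_def)
  have JU: "(Jmat m * transpose_mat u) $$ (k, n - 1) = (-1) ^ (k + 1) * u $$ (n - 1, n - 1 - k)" if "k < n" for k
  proof -
    have "(Jmat m * transpose_mat u) $$ (k, n - 1) = (-1) ^ (k + 1) * transpose_mat u $$ (n - 1 - k, n - 1)"
      unfolding Jmat_monomial n_def[symmetric] by (rule index_monomial_mat_mult[OF ut]) (use that in auto)
    then show ?thesis using that u by simp
  qed
  have "0 = Jmat m $$ (j, n - 1)"
    using assms by (simp add: Jmat_def n_def)
  also have "\<dots> = (u * (Jmat m * transpose_mat u)) $$ (j, n - 1)"
    using uJu assoc_mult_mat[OF u(1) J ut] by simp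
  also have "\<dots> = (\<Sum>k<n. u $$ (j,k) * (Jmat m * transpose_mat u) $$ (k, n - 1))"
    by (rule index_mult_mat_sum[OF u(1) mult_carrier_mat[OF J ut]]) (use assms in \<open>auto simp: n_def\<close>)
  also have "\<dots> = (\<Sum>k<n. u $$ (j,k) * ((-1) ^ (k + 1) * u $$ (n - 1, n - 1 - k)))"
    by (rule sum.cong[OF refl]) (simp only: JU lessThan_iff)
  also have "\<dots> = (\<Sum>k<j. u $$ (j,k) * ((-1) ^ (k + 1) * u $$ (n - 1, n - 1 - k)))
      + (\<Sum>k=j..<n. u $$ (j,k) * ((-1) ^ (k + 1) * u $$ (n - 1, n - 1 - k)))"
    using assms by (simp add: lessThan_atLeast0 sum.atLeastLessThan_concat n_def)
  also have "(\<Sum>k=j..<n. u $$ (j,k) * ((-1) ^ (k + 1) * u $$ (n - 1, n - 1 - k))) =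
      (-1) ^ (j + 1) * u $$ (n - 1, n - 1 - j)"
    using assms u by (subst sum.atLeast_Suc_lessThan) (auto simp: n_def intro!: sum.neutral)
  finally show ?thesis
    by (simp add: n_def)
qed

text \<open>Entry \<open>(1, 2m - 1)\<close> of \<open>u\<^sup>T J u = J\<close>.\<close>
lemma Uplus_corner:
  assumes "u \<in> Uplus m" "2 \<le> m"
  shows "u $$ (0,1) = u $$ (2*m - 2, 2*m - 1)"
proof -
  define n where "n = 2*m"
  note u = Uplus_entries[OF assms(1), folded n_def]
  have ut: "transpose_mat u \<in> carrier_mat n n" and J: "Jmat m \<in> carrier_mat n n"
    using u by (auto simp: n_def)
  have UJ: "(transpose_mat u * Jmat m) $$ (1, l) =
      (if l = n - 1 then - u $$ (0,1) else if l = n - 2 then 1 else 0)" if "l < n" for l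
  proof -
    have "(transpose_mat u * Jmat m) $$ (1, l) = transpose_mat u $$ (1, n - 1 - l) * (-1) ^ (n - 1 - l + 1)"
      unfolding Jmat_monomial n_def[symmetric]
      by (rule index_mult_monomial_mat[OF ut]) (use that assms in \<open>auto simp: n_def\<close>)
    then show ?thesis
      using that assms u(3)[of 1 "n - 1 - l"] u(4)[of 1] u(1) by (auto simp: n_def numeral_2_eq_2)
  qed
  have "0 = Jmat m $$ (1, n - 1)"
    using assms by (simp add: Jmat_def n_def)
  also have "\<dots> = (transpose_mat u * Jmat m * u) $$ (1, n - 1)"
    using u(2) by (simp add: n_def)
  also have "\<dots> = (\<Sum>l<n. (transpose_mat u * Jmat m) $$ (1,l) * u $$ (l, n - 1))"
    by (rule index_mult_mat_sum[OF mult_carrier_mat[OF ut J] u(1)]) (use assms in \<open>auto simp: n_def\<close>)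
  also have "\<dots> = (\<Sum>l<n. (if l = n - 1 then - u $$ (0,1) else if l = n - 2 then 1 else 0) * u $$ (l, n - 1))"
    by (rule sum.cong[OF refl]) (simp only: UJ lessThan_iff)
  also have "\<dots> = - u $$ (0,1) * u $$ (n - 1, n - 1) + u $$ (n - 2, n - 1)"
    unfolding sum_two_point using assms by (simp add: n_def)
  finally show ?thesis
    using u(4)[of "n - 1"] assms by (simp add: n_def)
qed

section \<open>The decomposition of a point of \<open>Z\<^sub>d\<close>\<close>

lemma Bminus_w0dot_antitriangular:
  assumes "b \<in> Bminus m" "1 \<le> m" "r < 2*m" "c < 2*m" "r + c \<le> 2*m - 2"
  shows "(b * w0dot m) $$ (r,c) = 0"
proof -
  have "(b * w0dot m) $$ (r,c) = b $$ (r, 2*m - 1 - c) * (-1) ^ (2*m - 1 - c)"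
    unfolding w0dot_monomial[OF assms(2)]
    by (rule index_mult_monomial_mat[OF Bminus_entries(1)[OF assms(1)]]) (use assms in auto)
  also have "b $$ (r, 2*m - 1 - c) = 0"
    using assms by (intro Bminus_entries(2)[OF assms(1)]) arith+
  finally show ?thesis
    by simp
qed

locale Zd_point =
  fixes m :: nat and d z u1 u2 :: "complex mat"
  assumes two_le_m: "2 \<le> m"
    and d_TorWP: "d \<in> TorWP m"
    and z_Zd: "z \<in> Zd m d"
    and u1_UplusWP: "u1 \<in> UplusWP m"
    and u2_Uminus: "u2 \<in> Uminus m"
    and z_decomp: "z = u1 * wPdot m * d * u2"
begin

lemma d_Tor: "d \<in> Tor m"
  using d_TorWP by (simp add: TorWP_def)

lemmas d_carrier = Tor_entries(1)[OF d_Tor]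
  and d_off_diag = Tor_entries(2)[OF d_Tor]
  and d_diag_opposite = Tor_entries(3)[OF d_Tor]

lemma d_diag_nonzero: "r < 2*m \<Longrightarrow> d $$ (r,r) \<noteq> 0"
  using d_diag_opposite by force

lemma d_monomial: "d = monomial_mat (2*m) id (\<lambda>r. d $$ (r,r))"
  by (rule diagonal_mat_monomial[OF d_carrier d_off_diag])

lemma wPdot_d_commute: "wPdot m * d = d * wPdot m"
  unfolding wPdot_def
proof (rule wordmat_commute[OF _ d_carrier])
  fix i assume "i \<in> set (concat (replicate (m - 1) [2..<m+1]))"
  then have "i \<in> {2..m}"
    by (cases "m - 1 = 0") auto
  then show "sdot m i * d = d * sdot m i"
    using d_TorWP by (simp add: TorWP_def)
qed

lemma d_diag_1_eq_opposite: "d $$ (1,1) = d $$ (2*m - 2, 2*m - 2)"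
proof -
  have "wP_perm m 1 < 2*m" "wP_perm m 1 = 2*m - 2" "wP_sign m 1 \<noteq> 0"
    using two_le_m by (auto simp: wP_perm_def wP_sign_def)
  moreover have "(wPdot m * d) $$ (1, wP_perm m 1) = (d * wPdot m) $$ (1, wP_perm m 1)"
    by (simp only: wPdot_d_commute)
  ultimately show ?thesis
    unfolding wPdot_monomial[OF two_le_m] using two_le_m
    by (subst (asm) (1 2) d_monomial) (simp add: monomial_mat_mult wP_perm_def)
qed

lemma u1_Uplus: "u1 \<in> Uplus m"
  using u1_UplusWP by (simp add: UplusWP_def)

lemmas u1_carrier = Uplus_entries(1)[OF u1_Uplus]
  and u1_lower_zero = Uplus_entries(3)[OF u1_Uplus]
  and u1_diag = Uplus_entries(4)[OF u1_Uplus]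
  and u2_carrier = Uminus_entries(1)[OF u2_Uminus]
  and u2_diag = Uminus_entries(4)[OF u2_Uminus]

lemma wP_perm_middle: "0 < r \<Longrightarrow> r < 2*m - 1 \<Longrightarrow> wP_perm m r = 2*m - 1 - r"
  and wP_perm_less: "r < 2*m \<Longrightarrow> wP_perm m r < 2*m"
  and wP_sign_nonzero: "wP_sign m r \<noteq> 0"
  by (auto simp: wP_perm_def wP_sign_def)

text \<open>\<open>u\<^sub>1 w\<^sub>P = w\<^sub>P v\<close> with \<open>v\<close> upper triangular, and \<open>w\<^sub>P\<close> reverses the middle indices.\<close>
lemma u1_middle_zero:
  assumes "1 \<le> r" "r < c" "c \<le> 2*m - 2"
  shows "u1 $$ (r,c) = 0"
proof -
  obtain v where v: "v \<in> Uplus m" and u1v: "u1 * wPdot m = wPdot m * v"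
    using u1_UplusWP by (auto simp: UplusWP_def)
  have "(u1 * wPdot m) $$ (r, 2*m - 1 - c) = u1 $$ (r,c) * wP_sign m c"
    unfolding wPdot_monomial[OF two_le_m]
    by (rule index_mult_monomial_mat[OF u1_carrier]) (use assms in \<open>auto simp: wP_perm_def\<close>)
  moreover have "(wPdot m * v) $$ (r, 2*m - 1 - c) = wP_sign m r * v $$ (2*m - 1 - r, 2*m - 1 - c)"
    unfolding wPdot_monomial[OF two_le_m] using assms
    by (subst index_monomial_mat_mult[OF Uplus_entries(1)[OF v]]) (auto simp: wP_perm_def)
  moreover have "v $$ (2*m - 1 - r, 2*m - 1 - c) = 0"
    using assms by (intro Uplus_entries(3)[OF v]) auto
  ultimately show ?thesis
    using u1v wP_sign_nonzero[of c] by simp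
qed

lemma wPdot_d_u2_entry:
  assumes "r < 2*m" "c < 2*m"
  shows "(wPdot m * d * u2) $$ (r,c) = wP_sign m r * d $$ (wP_perm m r, wP_perm m r) * u2 $$ (wP_perm m r, c)"
proof -
  have "wPdot m * d = monomial_mat (2*m) (wP_perm m) (\<lambda>r. wP_sign m r * d $$ (wP_perm m r, wP_perm m r))"
    unfolding wPdot_monomial[OF two_le_m] by (subst d_monomial, subst monomial_mat_mult) (auto simp: wP_perm_less)
  then show ?thesis
    using assms by (simp add: index_monomial_mat_mult[OF u2_carrier] wP_perm_less)
qed

lemma z_row_expansion:
  assumes "r < 2*m" "c < 2*m"
  shows "z $$ (r,c) = (\<Sum>l<2*m. u1 $$ (r,l) * (wPdot m * d * u2) $$ (l,c))"
proof -
  have W: "wPdot m \<in> carrier_mat (2*m) (2*m)"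
    by (simp add: wPdot_monomial[OF two_le_m])
  have "z = (u1 * wPdot m) * (d * u2)"
    unfolding z_decomp by (rule assoc_mult_mat[OF mult_carrier_mat[OF u1_carrier W] d_carrier u2_carrier])
  also have "\<dots> = u1 * (wPdot m * (d * u2))"
    by (rule assoc_mult_mat[OF u1_carrier W mult_carrier_mat[OF d_carrier u2_carrier]])
  also have "wPdot m * (d * u2) = wPdot m * d * u2"
    by (rule assoc_mult_mat[OF W d_carrier u2_carrier, symmetric])
  finally show ?thesis
    using assms by (simp only:) (rule index_mult_mat_sum[OF u1_carrier]; use W d_carrier u2_carrier in simp)
qed

lemma z_last_row:
  assumes "c < 2*m"
  shows "z $$ (2*m - 1, c) = d $$ (2*m - 1, 2*m - 1) * u2 $$ (2*m - 1, c)"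
proof -
  have "z $$ (2*m - 1, c) = (\<Sum>l<2*m. u1 $$ (2*m - 1, l) * (wPdot m * d * u2) $$ (l,c))"
    using two_le_m assms by (intro z_row_expansion) auto
  also have "\<dots> = (\<Sum>l<2*m. if l = 2*m - 1 then (wPdot m * d * u2) $$ (2*m - 1, c) else 0)"
    using two_le_m u1_lower_zero u1_diag by (intro sum.cong) auto
  also have "\<dots> = d $$ (2*m - 1, 2*m - 1) * u2 $$ (2*m - 1, c)"
    using two_le_m assms by (simp add: wPdot_d_u2_entry wP_perm_def wP_sign_def)
  finally show ?thesis .
qed

lemma z_middle_row:
  assumes "1 \<le> j" "j \<le> 2*m - 2" "c < 2*m"
  shows "z $$ (2*m - 1 - j, c) = (-1) ^ j * d $$ (j,j) * u2 $$ (j,c) + u1 $$ (2*m - 1 - j, 2*m - 1) * z $$ (2*m - 1, c)"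
proof -
  let ?r = "2*m - 1 - j" and ?N = "wPdot m * d * u2"
  have "z $$ (?r, c) = (\<Sum>l<2*m. u1 $$ (?r, l) * ?N $$ (l,c))"
    using assms by (intro z_row_expansion) auto
  also have "\<dots> = (\<Sum>l<2*m. (if l = ?r then 1 else if l = 2*m - 1 then u1 $$ (?r, 2*m - 1) else 0) * ?N $$ (l,c))"
  proof (intro sum.cong refl)
    fix l assume "l \<in> {..<2*m}"
    then consider "l < ?r" | "l = ?r" | "?r < l" "l \<le> 2*m - 2" | "l = 2*m - 1"
      by fastforce
    then show "u1 $$ (?r, l) * ?N $$ (l,c) =
        (if l = ?r then 1 else if l = 2*m - 1 then u1 $$ (?r, 2*m - 1) else 0) * ?N $$ (l,c)"
      by cases (use assms u1_lower_zero u1_diag u1_middle_zero in auto)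
  qed
  also have "\<dots> = ?N $$ (?r, c) + u1 $$ (?r, 2*m - 1) * ?N $$ (2*m - 1, c)"
    unfolding sum_two_point using assms by simp
  also have "?N $$ (?r, c) = (-1) ^ j * d $$ (j,j) * u2 $$ (j,c)"
  proof -
    have "even (2*m - 2 - j) \<longleftrightarrow> even j"
      using assms by (subst even_diff_nat) auto
    moreover have "\<not> (?r = 0 \<or> ?r = 2*m - 1)" "?r - 1 = 2*m - 2 - j"
      using assms by auto
    ultimately have "wP_sign m ?r = (-1) ^ j"
      by (simp add: wP_sign_def minus_one_power_iff)
    moreover have "wP_perm m ?r = j"
      using assms by (subst wP_perm_middle) auto
    ultimately show ?thesis
      using assms by (simp add: wPdot_d_u2_entry)
  qed
  also have "?N $$ (2*m - 1, c) = z $$ (2*m - 1, c)"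
    using assms two_le_m z_last_row[OF assms(3)] by (simp add: wPdot_d_u2_entry wP_perm_def wP_sign_def)
  finally show ?thesis .
qed

definition last_row :: "nat \<Rightarrow> complex" where
  "last_row c = u2 $$ (2*m - 1, c)"

definition row_factor :: "nat \<Rightarrow> complex" where
  "row_factor j = (-1) ^ (j + 1) * u1 $$ (2*m - 1 - j, 2*m - 1) * d $$ (2*m - 1, 2*m - 1) / d $$ (j,j)"

definition pairing_sum :: "nat \<Rightarrow> complex" where
  "pairing_sum j = (\<Sum>k<j. (-1) ^ (k + 1) * last_row k * last_row (2*m - 1 - k))"

lemma last_row_last: "last_row (2*m - 1) = 1"
  using two_le_m u2_diag by (simp add: last_row_def)

lemma plk_last_row:
  assumes "k < 2*m"
  shows "plk m z k = d $$ (2*m - 1, 2*m - 1) * last_row (2*m - 1 - k)"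
  using assms z_last_row[of "2*m - 1 - k"] by (simp add: plk_def ent_def last_row_def Suc_diff_Suc)

text \<open>Below the diagonal the middle rows of \<open>u\<^sub>2\<close> are multiples of its last row: the entries of
  \<open>z \<in> B\<^sub>- w\<^sub>0\<close> above the antidiagonal vanish.\<close>
lemma u2_rank_one:
  assumes "1 \<le> j" "j \<le> 2*m - 2" "c < j"
  shows "u2 $$ (j,c) = row_factor j * last_row c"
proof -
  obtain b where b: "b \<in> Bminus m" and zb: "z = b * w0dot m"
    using z_Zd by (auto simp: Zd_def)
  have "z $$ (2*m - 1 - j, c) = 0"
    unfolding zb using assms two_le_m by (intro Bminus_w0dot_antitriangular[OF b]) auto
  then have "(-1) ^ j * d $$ (j,j) * u2 $$ (j,c) + u1 $$ (2*m - 1 - j, 2*m - 1) * (d $$ (2*m - 1, 2*m - 1) * last_row c) = 0"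
    using assms z_middle_row[of j c] z_last_row[of c] by (simp add: last_row_def)
  then have "(-1) ^ j * ((-1) ^ j * d $$ (j,j) * u2 $$ (j,c) + u1 $$ (2*m - 1 - j, 2*m - 1) * (d $$ (2*m - 1, 2*m - 1) * last_row c)) = 0"
    by simp
  then have "d $$ (j,j) * u2 $$ (j,c) = (-1) ^ (j + 1) * u1 $$ (2*m - 1 - j, 2*m - 1) * d $$ (2*m - 1, 2*m - 1) * last_row c"
    by (simp add: algebra_simps flip: power_add mult_2) (simp add: eq_neg_iff_add_eq_0)
  moreover have "d $$ (j,j) \<noteq> 0"
    using assms d_diag_nonzero by auto
  ultimately show ?thesis
    unfolding row_factor_def by (simp add: field_simps)
qed

lemma row_factor_pairing_sum:
  assumes "1 \<le> j" "j \<le> 2*m - 2"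
  shows "row_factor j * pairing_sum j + (-1) ^ (j + 1) * last_row (2*m - 1 - j) = 0"
proof -
  have "(\<Sum>k<j. u2 $$ (j,k) * ((-1) ^ (k + 1) * last_row (2*m - 1 - k))) = row_factor j * pairing_sum j"
    unfolding pairing_sum_def sum_distrib_left using assms
    by (intro sum.cong) (auto simp: u2_rank_one)
  then show ?thesis
    using Uminus_row_relation[OF u2_Uminus, of j] assms by (simp add: last_row_def)
qed

lemma Dden_pairing_sum:
  assumes "l < 2*m"
  shows "Dden m (plk m z) l = d $$ (2*m - 1, 2*m - 1) ^ 2 * ((-1) ^ (l + 1) * pairing_sum (l + 1))"
proof -
  let ?a = "d $$ (2*m - 1, 2*m - 1)"
  have "Dden m (plk m z) l = (\<Sum>j=0..l. (-1) ^ j * (?a * last_row (2*m - 1 - (l - j))) * (?a * last_row (l - j)))"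
    unfolding Dden_def using assms by (intro sum.cong) (auto simp: plk_last_row)
  also have "\<dots> = (\<Sum>k=0..l. (-1) ^ (l - k) * (?a * last_row (2*m - 1 - k)) * (?a * last_row k))"
    by (rule sum.reindex_bij_witness[where i = "\<lambda>k. l - k" and j = "\<lambda>j. l - j"]) auto
  also have "\<dots> = (\<Sum>k<l + 1. ?a ^ 2 * ((-1) ^ (l + 1) * ((-1) ^ (k + 1) * last_row k * last_row (2*m - 1 - k))))"
  proof (intro sum.cong)
    fix k assume "k \<in> {..<l + 1}"
    then have "(-1::complex) ^ (l - k) = (-1) ^ (l + 1) * (-1) ^ (k + 1)"
      by (simp add: minus_one_power_iff flip: power_add)
    then show "(-1) ^ (l - k) * (?a * last_row (2*m - 1 - k)) * (?a * last_row k) =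
        ?a ^ 2 * ((-1) ^ (l + 1) * ((-1) ^ (k + 1) * last_row k * last_row (2*m - 1 - k)))"
      by (simp add: power2_eq_square algebra_simps)
  qed auto
  finally show ?thesis
    by (simp only: pairing_sum_def sum_distrib_left)
qed

lemma u2_entry_1_0_last_row: "u2 $$ (1,0) = last_row (2*m - 2)"
proof -
  have "row_factor 1 * pairing_sum 1 + last_row (2*m - 2) = 0"
    using row_factor_pairing_sum[of 1] two_le_m by (simp add: numeral_2_eq_2)
  moreover have "pairing_sum 1 = - last_row 0"
    using last_row_last by (simp add: pairing_sum_def)
  ultimately show ?thesis
    using u2_rank_one[of 1 0] two_le_m by (simp add: algebra_simps)
qed

lemma plk_0: "plk m z 0 = d $$ (2*m - 1, 2*m - 1)"
  and plk_1: "plk m z 1 = d $$ (2*m - 1, 2*m - 1) * last_row (2*m - 2)"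
  and plk_last: "plk m z (2*m - 1) = d $$ (2*m - 1, 2*m - 1) * last_row 0"
  using plk_last_row[of 0] plk_last_row[of 1] plk_last_row[of "2*m - 1"] last_row_last two_le_m
  by (simp_all add: numeral_2_eq_2)

lemma u2_entry_1_0: "u2 $$ (1,0) = plk m z 1 / plk m z 0"
  using d_diag_nonzero[of "2*m - 1"] two_le_m unfolding plk_0 plk_1 u2_entry_1_0_last_row by simp

lemma u2_subdiagonal:
  assumes "1 \<le> l" "l \<le> m - 1" "Dden m (plk m z) l \<noteq> 0"
  shows "u2 $$ (l + 1, l) = plk m z (l + 1) * plk m z (2*m - 1 - l) / Dden m (plk m z) l"
proof -
  let ?a = "d $$ (2*m - 1, 2*m - 1)" and ?s = "(-1::complex) ^ (l + 1)"
  have D: "Dden m (plk m z) l = ?a ^ 2 * (?s * pairing_sum (l + 1))"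
    using assms by (intro Dden_pairing_sum) auto
  with assms have S: "pairing_sum (l + 1) \<noteq> 0" and a: "?a \<noteq> 0"
    by auto
  have ss: "?s * ?s = 1"
    by (simp flip: power_add mult_2)
  have "row_factor (l + 1) * pairing_sum (l + 1) = ?s * last_row (2*m - 2 - l)"
    using row_factor_pairing_sum[of "l + 1"] assms by (simp add: eq_neg_iff_add_eq_0)
  then have "row_factor (l + 1) = ?s * last_row (2*m - 2 - l) / pairing_sum (l + 1)"
    using S by (simp add: field_simps)
  moreover have "u2 $$ (l + 1, l) = row_factor (l + 1) * last_row l"
    using assms by (intro u2_rank_one) auto
  moreover have "plk m z (l + 1) = ?a * last_row (2*m - 2 - l)" "plk m z (2*m - 1 - l) = ?a * last_row l"
    using assms by (simp_all add: plk_last_row)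
  ultimately show ?thesis
    unfolding D using S a ss by (simp add: field_simps power2_eq_square)
qed

lemma u1_entry_0_1:
  assumes "plk m z (2*m - 1) \<noteq> 0"
  shows "u1 $$ (0,1) = alpha1 d * plk m z 1 / plk m z (2*m - 1)"
proof -
  let ?a = "d $$ (2*m - 1, 2*m - 1)" and ?b = "d $$ (1,1)"
  have a: "?a \<noteq> 0" and b: "?b \<noteq> 0"
    using d_diag_nonzero two_le_m by auto
  have R0: "last_row 0 \<noteq> 0"
    using assms plk_last by simp
  have "d $$ (0,0) * ?a = 1" "?b * ?b = 1"
    using d_diag_opposite[of 0] d_diag_opposite[of 1] d_diag_1_eq_opposite two_le_m by (simp_all add: numeral_2_eq_2)
  then have alpha: "alpha1 d = ?b / ?a"
    using a b by (simp add: alpha1_def ent_def field_simps)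
  have "u1 $$ (2*m - 2, 2*m - 1) * ?a * last_row 0 = ?b * last_row (2*m - 2)"
    using u2_rank_one[of 1 0] u2_entry_1_0_last_row two_le_m b
    by (simp add: row_factor_def field_simps numeral_2_eq_2)
  then have "u1 $$ (2*m - 2, 2*m - 1) = ?b * last_row (2*m - 2) / (?a * last_row 0)"
    using a R0 by (simp add: field_simps)
  then show ?thesis
    unfolding Uplus_corner[OF u1_Uplus two_le_m] plk_1 plk_last alpha using a R0 by simp
qed

lemma Fsum_eq: "Fsum m u1 u2 = u1 $$ (0,1) + (u2 $$ (1,0) + (\<Sum>l=1..m-1. u2 $$ (l + 1, l)))"
proof -
  have "(\<Sum>i=1..m. ent u1 i (i + 1)) = ent u1 1 2 + (\<Sum>i=2..m. ent u1 i (i + 1))"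
    using two_le_m by (simp add: sum.atLeast_Suc_atMost numeral_2_eq_2)
  also have "(\<Sum>i=2..m. ent u1 i (i + 1)) = 0"
    using two_le_m by (intro sum.neutral) (auto simp: ent_def intro!: u1_middle_zero)
  moreover have "(\<Sum>i=1..m. ent u2 (i + 1) i) = ent u2 2 1 + (\<Sum>l=1..m-1. ent u2 (l + 2) (l + 1))"
    using two_le_m sum.shift_bounds_cl_Suc_ivl[of "\<lambda>i. ent u2 (i + 1) i" 1 "m - 1"]
    by (simp add: sum.atLeast_Suc_atMost numeral_2_eq_2)
  ultimately show ?thesis
    by (simp add: Fsum_def ent_def numeral_2_eq_2)
qed

end

theorem mainTheorem4:
  fixes m :: nat and d z u1 u2 :: "complex mat"
  assumes "m \<ge> 2"
    and "d \<in> TorWP m"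
    and "z \<in> Zd m d"
    and "u1 \<in> UplusWP m" and "u2 \<in> Uminus m"
    and "z = u1 * wPdot m * d * u2"
    and "plk m z 0 \<noteq> 0" and "plk m z (2*m-1) \<noteq> 0"
    and "\<forall>l\<in>{1..m-1}. Dden m (plk m z) l \<noteq> 0"
  shows "Fsum m u1 u2 = Wq m (alpha1 d) (plk m z)"
proof -
  interpret Zd_point m d z u1 u2
    using assms(1-6) by unfold_locales
  have "(\<Sum>l=1..m-1. u2 $$ (l + 1, l)) = (\<Sum>l=1..m-1. plk m z (l + 1) * plk m z (2*m - 1 - l) / Dden m (plk m z) l)"
    using assms(9) by (intro sum.cong refl u2_subdiagonal) auto
  then show ?thesis
    unfolding Fsum_eq Wq_def u1_entry_0_1[OF assms(8)] u2_entry_1_0 by (simp add: algebra_simps)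
qed

end
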